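(* The graded graph $(\mathbf{S}_\bullet(\mathfrak{G}), \mathbf{U})$ is $\phi$-diagonal self-dual (i.e. $\mathbf{U}^\star\mathbf{U} - \mathbf{U}\mathbf{U}^\star = \phi$ for some diagonal linear map $\phi$) if and only if $\mathfrak{G}$ is the empty alphabet or a singleton alphabet. When $\mathfrak{G}$ is a singleton, $\phi$ satisfies $\phi(\mathfrak{t}) = (|\mathfrak{t}| - \#\mathcal{N}^{\mathrm{m}}(\mathfrak{t}))\,\mathfrak{t}$ for any $\mathfrak{G}$-tree $\mathfrak{t}$.
   Context: $\mathfrak{G}$ is a finite alphabet (letters with arities $\geq 1$). A $\mathfrak{G}$-tree is either the leaf (the tree with no internal node) or a root decorated by a letter $\mathtt{a}\in\mathfrak{G}$ with $|\mathtt{a}|$ children that are $\mathfrak{G}$-trees. Its degree is its number of internal nodes and $|\mathfrak{t}|$ its number of leaves (ordered left to right). $\mathbf{S}_\bullet(\mathfrak{G})$ is the set of $\mathfrak{G}$-trees graded by degree. $\mathfrak{t}\circ_i\mathtt{a}$ replaces the $i$-th leaf of $\mathfrak{t}$ by an internal node decorated by $\mathtt{a}$ with only leaves as children. $\mathbf{U}(\mathfrak{t}) = \sum_{\mathtt{a}\in\mathfrak{G},\, i\in[|\mathfrak{t}|]} \mathfrak{t}\circ_i\mathtt{a}$, and $\mathbf{U}^\star$ is its adjoint for the scalar product making trees orthonormal. A diagonal linear map sends each tree $\mathfrak{t}$ to $\lambda_\mathfrak{t}\mathfrak{t}$. An internal node is maximal if all its children are leaves, and $\mathcal{N}^{\mathrm{m}}(\mathfrak{t})$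 is the set of maximal internal nodes of $\mathfrak{t}$. *)

theory Defs
  imports Main
begin

datatype 'a tree = Leaf | Node 'a "'a tree list"

inductive gtree :: "'a set \<Rightarrow> ('a \<Rightarrow> nat) \<Rightarrow> 'a tree \<Rightarrow> bool" for G ar where
  gtree_Leaf: "gtree G ar Leaf"
| gtree_Node: "\<lbrakk> a \<in> G; length ts = ar a; \<forall>t\<in>set ts. gtree G ar t \<rbrakk> \<Longrightarrow> gtree G ar (Node a ts)"

fun leaves :: "'a tree \<Rightarrow> nat" where
  "leaves Leaf = 1"
| "leaves (Node a ts) = sum_list (map leaves ts)"

fun degree :: "'a tree \<Rightarrow> nat" where
  "degree Leaf = 0"
| "degree (Node a ts) = Suc (sum_list (map degree ts))"

fun nmax :: "'a tree \<Rightarrow> nat" where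
  "nmax Leaf = 0"
| "nmax (Node a ts) = (if \<forall>t\<in>set ts. t = Leaf then 1 else sum_list (map nmax ts))"

text \<open>graft ar t i a = t \<circ>_(i+1) a : replace the leaf of index i (0-based, left to right)
  by a node labelled a with ar a leaf children.\<close>
fun graft :: "('a \<Rightarrow> nat) \<Rightarrow> 'a tree \<Rightarrow> nat \<Rightarrow> 'a \<Rightarrow> 'a tree"
and graftl :: "('a \<Rightarrow> nat) \<Rightarrow> 'a tree list \<Rightarrow> nat \<Rightarrow> 'a \<Rightarrow> 'a tree list" where
  "graft ar Leaf i a = (if i = 0 then Node a (replicate (ar a) Leaf) else Leaf)"
| "graft ar (Node b ts) i a = Node b (graftl ar ts i a)"
| "graftl ar [] i a = []"
| "graftl ar (t # ts) i a =
     (if i < leaves t then graft ar t i a # ts else t # graftl ar ts (i - leaves t) a)"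

text \<open>Matrix coefficient of U: coefficient of s in U(t) = \<Sum>_{a\<in>G, i} t \<circ>_i a.\<close>
definition Ucoef :: "'a set \<Rightarrow> ('a \<Rightarrow> nat) \<Rightarrow> 'a tree \<Rightarrow> 'a tree \<Rightarrow> int" where
  "Ucoef G ar s t = int (card {(a, i). a \<in> G \<and> i < leaves t \<and> graft ar t i a = s})"

text \<open>Coefficient of t' in (U* U - U U*)(t), where U* is the adjoint of U for the scalar
  product making trees orthonormal, so that U*(s) = \<Sum>_r Ucoef s r \<cdot> r.\<close>
definition commcoef :: "'a set \<Rightarrow> ('a \<Rightarrow> nat) \<Rightarrow> 'a tree \<Rightarrow> 'a tree \<Rightarrow> int" where
  "commcoef G ar t' t =
     (\<Sum>s\<in>{s. Ucoef G ar s t \<noteq> 0}. Ucoef G ar s t * Ucoef G ar s t')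
   - (\<Sum>r\<in>{r. gtree G ar r \<and> Ucoef G ar t r \<noteq> 0}. Ucoef G ar t r * Ucoef G ar t' r)"

text \<open>(S(G), U) is phi-diagonal self-dual: U*U - UU* = phi with phi diagonal,
  phi(t) = lambda_t t, given by its eigenvalue function.\<close>
definition diag_self_dual :: "'a set \<Rightarrow> ('a \<Rightarrow> nat) \<Rightarrow> ('a tree \<Rightarrow> int) \<Rightarrow> bool" where
  "diag_self_dual G ar \<phi> \<longleftrightarrow>
     (\<forall>t t'. gtree G ar t \<longrightarrow> gtree G ar t' \<longrightarrow>
        commcoef G ar t' t = (if t' = t then \<phi> t else 0))"

end

theory Submission
  imports Defs
begin

text \<open>
  In the basis of trees, the coefficient of \<open>t'\<close> in \<open>(U\<^sup>\<star>U - UU\<^sup>\<star>)(t)\<close> is the number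
  of common upper neighbours of \<open>t\<close> and \<open>t'\<close> (trees obtained from both by one grafting)
  minus the number of their common lower neighbours; distinct graftings give distinct trees, so
  nothing is counted twice. Two distinct letters \<open>a\<close>, \<open>b\<close> break diagonality at once:
  the corollas of \<open>a\<close> and \<open>b\<close> have no common upper neighbour (their roots differ) but share
  the lower neighbour \<open>Leaf\<close>.

  Over a one-letter alphabet of arity \<open>k\<close>, a tree is determined by the addresses of its
  internal nodes, and these address sets are exactly the finite prefix-closed sets of words over
  \<open>{0..<k}\<close>. They are closed under union and intersection, grafting adds one address and
  deleting a maximal node removes one. In any family of sets closed under union and intersection,
  two distinct members have a common upper cover iff they have a common lower cover, and both are
  then unique (\<open>P \<union> P'\<close> and \<open>P \<inter> P'\<close>). Hence off-diagonal coefficients vanish, and on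
  the diagonal one counts \<open>|t|\<close> upper covers against \<open>#\<N>\<^sup>m(t)\<close> lower covers.
\<close>

section \<open>Covers in a family of sets\<close>

definition upper_covers :: "'b set set \<Rightarrow> 'b set \<Rightarrow> 'b set set" where
  "upper_covers F P = {Q \<in> F. \<exists>x. x \<notin> P \<and> Q = insert x P}"

definition lower_covers :: "'b set set \<Rightarrow> 'b set \<Rightarrow> 'b set set" where
  "lower_covers F P = {Q \<in> F. \<exists>x. x \<notin> Q \<and> P = insert x Q}"

lemma insert_eq_insert_crossed:
  assumes "insert x P = insert x' P'" "x \<notin> P" "x' \<notin> P'" "P \<noteq> P'"
  shows "x \<in> P'" "x' \<in> P"
proof -
  have "x \<noteq> x'"
  proof
    assume "x = x'"
    then have "P = insert x P - {x}" "P' = insert x P' - {x}" using assms(2,3) by auto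
    with assms(1,4) \<open>x = x'\<close> show False by simp
  qed
  moreover have "x \<in> insert x' P'" "x' \<in> insert x P" using assms(1) by auto
  ultimately show "x \<in> P'" "x' \<in> P" by auto
qed

lemma common_upper_covers_subset:
  "P \<noteq> P' \<Longrightarrow> upper_covers F P \<inter> upper_covers F P' \<subseteq> {P \<union> P'}"
  unfolding upper_covers_def by (auto dest: insert_eq_insert_crossed)

lemma common_lower_covers_subset:
  "P \<noteq> P' \<Longrightarrow> lower_covers F P \<inter> lower_covers F P' \<subseteq> {P \<inter> P'}"
  unfolding lower_covers_def by auto

lemma common_upper_cover_imp_lower:
  assumes "\<And>A B. A \<in> F \<Longrightarrow> B \<in> F \<Longrightarrow> A \<inter> B \<in> F" and "P \<in> F" "P' \<in> F" "P \<noteq> P'"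
    and "Q \<in> upper_covers F P \<inter> upper_covers F P'"
  shows "P \<inter> P' \<in> lower_covers F P \<inter> lower_covers F P'"
proof -
  from assms(5) obtain x x' where "x \<notin> P" "Q = insert x P" "x' \<notin> P'" "Q = insert x' P'"
    unfolding upper_covers_def by blast
  moreover from this have "x \<in> P'" "x' \<in> P"
    using insert_eq_insert_crossed[of x P x' P'] assms(4) by auto
  ultimately have "P = insert x' (P \<inter> P')" "P' = insert x (P \<inter> P')" "x \<notin> P \<inter> P'" "x' \<notin> P \<inter> P'"
    by auto
  then show ?thesis using assms(1-3) unfolding lower_covers_def by blast
qed

lemma common_lower_cover_imp_upper:
  assumes "\<And>A B. A \<in> F \<Longrightarrow> B \<in> F \<Longrightarrow> A \<union> B \<in> F" and "P \<in> F" "P' \<in> F" "P \<noteq> P'"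
    and "Q \<in> lower_covers F P \<inter> lower_covers F P'"
  shows "P \<union> P' \<in> upper_covers F P \<inter> upper_covers F P'"
proof -
  from assms(5) obtain x x' where "x \<notin> Q" "P = insert x Q" "x' \<notin> Q" "P' = insert x' Q"
    unfolding lower_covers_def by blast
  with assms(4) have "P \<union> P' = insert x' P" "P \<union> P' = insert x P'" "x' \<notin> P" "x \<notin> P'"
    by auto
  then show ?thesis using assms(1-3) unfolding upper_covers_def by blast
qed

theorem card_common_upper_covers_eq_lower:
  assumes "\<And>A B. A \<in> F \<Longrightarrow> B \<in> F \<Longrightarrow> A \<union> B \<in> F"
    and "\<And>A B. A \<in> F \<Longrightarrow> B \<in> F \<Longrightarrow> A \<inter> B \<in> F"
    and "P \<in> F" "P' \<in> F" "P \<noteq> P'"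
  shows "card (upper_covers F P \<inter> upper_covers F P') = card (lower_covers F P \<inter> lower_covers F P')"
proof (cases "upper_covers F P \<inter> upper_covers F P' = {}")
  case True
  then have "lower_covers F P \<inter> lower_covers F P' = {}"
    using common_lower_cover_imp_upper[OF assms(1,3-5)] by blast
  with True show ?thesis by simp
next
  case False
  then have "upper_covers F P \<inter> upper_covers F P' = {P \<union> P'}"
    using common_upper_covers_subset[OF assms(5)] by blast
  moreover from False have "lower_covers F P \<inter> lower_covers F P' = {P \<inter> P'}"
    using common_upper_cover_imp_lower[OF assms(2-5)] common_lower_covers_subset[OF assms(5)] by blast
  ultimately show ?thesis by simp
qed

section \<open>Grafting\<close>

lemma degree_graft:
  "i < leaves t \<Longrightarrow> degree (graft ar t i c) = Suc (degree t)"
  "i < sum_list (map leaves ts) \<Longrightarrow> sum_list (map degree (graftl ar ts i c)) = Suc (sum_list (map degree ts))"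
  by (induction ar t i c and ar ts i c rule: graft_graftl.induct) auto

lemma graft_inject:
  "i < leaves t \<Longrightarrow> j < leaves t \<Longrightarrow> graft ar t i a = graft ar t j b \<Longrightarrow> i = j \<and> a = b"
  "i < sum_list (map leaves ts) \<Longrightarrow> j < sum_list (map leaves ts) \<Longrightarrow>
    graftl ar ts i a = graftl ar ts j b \<Longrightarrow> i = j \<and> a = b"
proof (induction ar t i a and ar ts i a arbitrary: j and j rule: graft_graftl.induct)
  case (4 ar t ts i a)
  have grown: "graft ar t k c \<noteq> t" if "k < leaves t" for k c
    using degree_graft(1)[OF that, of ar c] by (metis n_not_Suc_n)
  show ?case
  proof (cases "i < leaves t"; cases "j < leaves t")
    assume "i < leaves t" "j < leaves t"
    moreover from this have "graft ar t i a = graft ar t j b" using "4.prems"(3) by simp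
    ultimately show ?thesis using "4.IH"(1) by blast
  next
    assume "i < leaves t" "\<not> j < leaves t"
    then show ?thesis using "4.prems"(3) grown by simp
  next
    assume "\<not> i < leaves t" "j < leaves t"
    then show ?thesis using "4.prems"(3) grown by (simp add: eq_commute[of t])
  next
    assume "\<not> i < leaves t" "\<not> j < leaves t"
    moreover from this have "i - leaves t = j - leaves t \<and> a = b"
      using "4.IH"(2)[of "j - leaves t"] "4.prems" by simp
    ultimately show ?thesis using eq_diff_iff[of "leaves t" i j] by simp
  qed
qed auto

lemma length_graftl [simp]: "length (graftl ar ts i a) = length ts"
  by (induction ts arbitrary: i) auto

lemma gtree_graft:
  "a \<in> G \<Longrightarrow> gtree G ar t \<Longrightarrow> gtree G ar (graft ar t i a)"
  "a \<in> G \<Longrightarrow> \<forall>u\<in>set ts. gtree G ar u \<Longrightarrow> \<forall>u\<in>set (graftl ar ts i a). gtree G ar u"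
  by (induction ar t i a and ar ts i a rule: graft_graftl.induct) (auto intro!: gtree.intros elim: gtree.cases)

lemma graftl_eq_list_update:
  "i < sum_list (map leaves ts) \<Longrightarrow>
    \<exists>c j. c < length ts \<and> j < leaves (ts ! c) \<and> graftl ar ts i a = ts[c := graft ar (ts ! c) j a]"
proof (induction ts arbitrary: i)
  case (Cons t ts)
  show ?case
  proof (cases "i < leaves t")
    case True
    then show ?thesis by (intro exI[of _ 0] exI[of _ i]) simp
  next
    case False
    with Cons.prems have "i - leaves t < sum_list (map leaves ts)" by simp
    with Cons.IH obtain c j where "c < length ts" "j < leaves (ts ! c)"
      "graftl ar ts (i - leaves t) a = ts[c := graft ar (ts ! c) j a]"
      by blast
    with False show ?thesis by (intro exI[of _ "Suc c"] exI[of _ j]) simp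
  qed
qed simp

lemma graftl_offset:
  "c < length ts \<Longrightarrow> j < leaves (ts ! c) \<Longrightarrow>
    graftl ar ts (sum_list (map leaves (take c ts)) + j) a = ts[c := graft ar (ts ! c) j a]"
  by (induction ts arbitrary: c) (auto simp: less_Suc_eq_0_disj)

lemma leaf_offset_less:
  "c < length ts \<Longrightarrow> j < leaves (ts ! c) \<Longrightarrow>
    sum_list (map leaves (take c ts)) + j < sum_list (map leaves ts)"
  by (induction ts arbitrary: c) (auto simp: less_Suc_eq_0_disj)

definition grafts :: "'a set \<Rightarrow> ('a \<Rightarrow> nat) \<Rightarrow> 'a tree \<Rightarrow> 'a tree set" where
  "grafts G ar t = {graft ar t i c | c i. c \<in> G \<and> i < leaves t}"

definition ungrafts :: "'a set \<Rightarrow> ('a \<Rightarrow> nat) \<Rightarrow> 'a tree \<Rightarrow> 'a tree set" where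
  "ungrafts G ar t = {r. gtree G ar r \<and> t \<in> grafts G ar r}"

lemma Ucoef_eq_of_bool: "Ucoef G ar s t = of_bool (s \<in> grafts G ar t)"
proof (cases "s \<in> grafts G ar t")
  case True
  then obtain c i where ci: "c \<in> G" "i < leaves t" "s = graft ar t i c"
    unfolding grafts_def by blast
  then have "{(c', i'). c' \<in> G \<and> i' < leaves t \<and> graft ar t i' c' = s} = {(c, i)}"
    by (auto dest: graft_inject(1))
  then show ?thesis using True by (simp add: Ucoef_def)
next
  case False
  then have none: "{(c', i'). c' \<in> G \<and> i' < leaves t \<and> graft ar t i' c' = s} = {}"
    unfolding grafts_def by blast
  show ?thesis using False unfolding Ucoef_def none by simp
qed

lemma finite_grafts:
  assumes "finite G"
  shows "finite (grafts G ar t)"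
proof -
  have "grafts G ar t = (\<lambda>(c, i). graft ar t i c) ` (G \<times> {..<leaves t})"
    unfolding grafts_def by auto
  then show ?thesis using assms by simp
qed

lemma grafts_subset_gtree: "gtree G ar t \<Longrightarrow> grafts G ar t \<subseteq> {s. gtree G ar s}"
  unfolding grafts_def by (auto intro: gtree_graft(1))

lemma ungrafts_gtree: "ungrafts G ar t \<subseteq> {r. gtree G ar r}"
  unfolding ungrafts_def by blast

lemma card_grafts_singleton: "card (grafts {a} ar t) = leaves t"
proof -
  have "grafts {a} ar t = (\<lambda>i. graft ar t i a) ` {..<leaves t}"
    unfolding grafts_def by auto
  moreover have "inj_on (\<lambda>i. graft ar t i a) {..<leaves t}"
    by (auto simp: inj_on_def dest: graft_inject(1))
  ultimately show ?thesis by (simp add: card_image)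
qed

lemma commcoef_eq_card:
  assumes "finite G" and "finite (ungrafts G ar t)"
  shows "commcoef G ar t' t =
    int (card (grafts G ar t \<inter> grafts G ar t')) - int (card (ungrafts G ar t \<inter> ungrafts G ar t'))"
proof -
  have "{s. Ucoef G ar s t \<noteq> 0} = grafts G ar t"
    by (simp add: Ucoef_eq_of_bool)
  moreover have "{r. gtree G ar r \<and> Ucoef G ar t r \<noteq> 0} = ungrafts G ar t"
    by (simp add: Ucoef_eq_of_bool ungrafts_def)
  moreover have "(\<Sum>r\<in>ungrafts G ar t. Ucoef G ar t r * Ucoef G ar t' r)
      = (\<Sum>r\<in>ungrafts G ar t. of_bool (r \<in> ungrafts G ar t'))"
    by (intro sum.cong) (auto simp: Ucoef_eq_of_bool ungrafts_def)
  ultimately show ?thesis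
    using assms finite_grafts[OF assms(1)] by (simp add: commcoef_def Ucoef_eq_of_bool)
qed

lemma grafts_Node: "s \<in> grafts G ar (Node b ts) \<Longrightarrow> \<exists>us. s = Node b us"
  unfolding grafts_def by auto

lemma ungrafts_corolla:
  assumes "a \<in> G"
  shows "ungrafts G ar (Node a (replicate (ar a) Leaf)) = {Leaf}"
proof (intro equalityI subsetI)
  fix r assume "r \<in> ungrafts G ar (Node a (replicate (ar a) Leaf))"
  then obtain c i where "i < leaves r" "graft ar r i c = Node a (replicate (ar a) Leaf)"
    unfolding ungrafts_def grafts_def by force
  then have "degree r = 0" using degree_graft(1)[of i r ar c] by (simp add: sum_list_replicate)
  then show "r \<in> {Leaf}" by (cases r) auto
next
  show "r \<in> ungrafts G ar (Node a (replicate (ar a) Leaf))" if "r \<in> {Leaf}" for r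
    using that assms unfolding ungrafts_def grafts_def by (force intro: gtree.intros)
qed

lemma commcoef_distinct_corollas:
  assumes "finite G" "a \<in> G" "b \<in> G" "a \<noteq> b"
  shows "commcoef G ar (Node b (replicate (ar b) Leaf)) (Node a (replicate (ar a) Leaf)) = -1"
proof -
  have "grafts G ar (Node a (replicate (ar a) Leaf)) \<inter> grafts G ar (Node b (replicate (ar b) Leaf)) = {}"
    using assms(4) by (auto dest!: grafts_Node)
  then show ?thesis
    using assms by (simp add: commcoef_eq_card ungrafts_corolla)
qed

section \<open>Node addresses\<close>

function node_addrs :: "'a tree \<Rightarrow> nat list set" where
  "node_addrs Leaf = {}"
| "node_addrs (Node b ts) = insert [] (\<Union>c<length ts. Cons c ` node_addrs (ts ! c))"
  by pat_completeness auto
termination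
  by (relation "measure size") (auto simp: less_Suc_eq_le intro!: size_list_estimation'[OF nth_mem])

declare node_addrs.simps(2) [simp del]

lemma Nil_in_node_addrs_Node [simp]: "[] \<in> node_addrs (Node b ts)"
  by (simp add: node_addrs.simps)

lemma Nil_in_node_addrs_iff: "[] \<in> node_addrs t \<longleftrightarrow> t \<noteq> Leaf"
  by (cases t) auto

lemma Cons_in_node_addrs_Node_iff [simp]:
  "c # p \<in> node_addrs (Node b ts) \<longleftrightarrow> c < length ts \<and> p \<in> node_addrs (ts ! c)"
  by (auto simp: node_addrs.simps)

lemma finite_node_addrs: "finite (node_addrs t)"
  by (induction t rule: node_addrs.induct) (auto simp: node_addrs.simps)

lemma node_addrs_prefix_closed: "p @ q \<in> node_addrs t \<Longrightarrow> p \<in> node_addrs t"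
proof (induction p arbitrary: t)
  case Nil
  then show ?case by (cases t) auto
next
  case (Cons c p)
  then show ?case by (cases t) auto
qed

lemma node_addrs_letter_bound: "gtree {a} ar t \<Longrightarrow> p @ [c] \<in> node_addrs t \<Longrightarrow> c < ar a"
proof (induction p arbitrary: t)
  case Nil
  then show ?case by (auto elim: gtree.cases)
next
  case (Cons d p)
  then show ?case by (auto elim!: gtree.cases) (metis nth_mem)
qed

definition kary_addrs :: "nat \<Rightarrow> nat list set \<Rightarrow> bool" where
  "kary_addrs k P \<longleftrightarrow>
    finite P \<and> (\<forall>p q. p @ q \<in> P \<longrightarrow> p \<in> P) \<and> (\<forall>p c. p @ [c] \<in> P \<longrightarrow> c < k)"

lemma kary_addrsI:
  "finite P \<Longrightarrow> (\<And>p q. p @ q \<in> P \<Longrightarrow> p \<in> P) \<Longrightarrow> (\<And>p c. p @ [c] \<in> P \<Longrightarrow> c < k) \<Longrightarrow>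
    kary_addrs k P"
  unfolding kary_addrs_def by blast

lemma kary_addrs_finite: "kary_addrs k P \<Longrightarrow> finite P"
  unfolding kary_addrs_def by blast

lemma kary_addrs_prefix: "kary_addrs k P \<Longrightarrow> p @ q \<in> P \<Longrightarrow> p \<in> P"
  unfolding kary_addrs_def by blast

lemma kary_addrs_letter: "kary_addrs k P \<Longrightarrow> p @ [c] \<in> P \<Longrightarrow> c < k"
  unfolding kary_addrs_def by blast

lemma kary_addrs_Nil: "kary_addrs k P \<Longrightarrow> p \<in> P \<Longrightarrow> [] \<in> P"
  using kary_addrs_prefix[of k P "[]" p] by simp

lemma kary_addrs_child: "kary_addrs k P \<Longrightarrow> kary_addrs k {p. c # p \<in> P}"
proof (rule kary_addrsI)
  assume P: "kary_addrs k P"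
  have "{p. c # p \<in> P} = Cons c -` P" by auto
  then show "finite {p. c # p \<in> P}" using kary_addrs_finite[OF P] by (simp add: finite_vimageI)
  show "p \<in> {p. c # p \<in> P}" if "p @ q \<in> {p. c # p \<in> P}" for p q
    using that kary_addrs_prefix[OF P, of "c # p" q] by simp
  show "d < k" if "p @ [d] \<in> {p. c # p \<in> P}" for p d
    using that kary_addrs_letter[OF P, of "c # p" d] by simp
qed

lemma kary_addrs_Un: "kary_addrs k P \<Longrightarrow> kary_addrs k Q \<Longrightarrow> kary_addrs k (P \<union> Q)"
  by (rule kary_addrsI) (blast dest: kary_addrs_finite kary_addrs_prefix kary_addrs_letter)+

lemma kary_addrs_Int: "kary_addrs k P \<Longrightarrow> kary_addrs k Q \<Longrightarrow> kary_addrs k (P \<inter> Q)"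
  by (rule kary_addrsI) (blast dest: kary_addrs_finite kary_addrs_prefix kary_addrs_letter)+

lemma kary_addrs_node_addrs: "gtree {a} ar t \<Longrightarrow> kary_addrs (ar a) (node_addrs t)"
  by (rule kary_addrsI) (auto intro: finite_node_addrs elim: node_addrs_prefix_closed node_addrs_letter_bound)

lemma node_addrs_inject:
  "gtree {a} ar t \<Longrightarrow> gtree {a} ar t' \<Longrightarrow> node_addrs t = node_addrs t' \<Longrightarrow> t = t'"
proof (induction t arbitrary: t' rule: gtree.induct)
  case gtree_Leaf
  then show ?case using Nil_in_node_addrs_iff[of t'] by simp
next
  case (gtree_Node b ts)
  have "[] \<in> node_addrs t'" using gtree_Node.prems(2)[symmetric] by (simp add: Nil_in_node_addrs_iff)
  then have "t' \<noteq> Leaf" by (simp add: Nil_in_node_addrs_iff)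
  with gtree_Node.prems(1) obtain us where
    t': "t' = Node a us" "length us = ar a" "\<forall>u\<in>set us. gtree {a} ar u"
    by (cases rule: gtree.cases) auto
  have "ts ! c = us ! c" if "c < length ts" for c
  proof -
    have "p \<in> node_addrs (ts ! c) \<longleftrightarrow> p \<in> node_addrs (us ! c)" for p
    proof -
      have "c # p \<in> node_addrs (Node b ts) \<longleftrightarrow> c # p \<in> node_addrs t'"
        by (simp only: gtree_Node.prems(2))
      then show ?thesis using that t' gtree_Node.hyps(1,2) by simp
    qed
    then have "node_addrs (ts ! c) = node_addrs (us ! c)" by blast
    moreover have "gtree {a} ar (us ! c)" using that t' gtree_Node.hyps(1,2) by simp
    ultimately show ?thesis using gtree_Node.IH that by simp
  qed
  then show ?case using gtree_Node.hyps(1,2) t' by (auto intro: nth_equalityI)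
qed

lemma inj_on_node_addrs: "inj_on node_addrs {t. gtree {a} ar t}"
  by (auto intro: inj_onI node_addrs_inject)

lemma card_child_addrs_less: "finite P \<Longrightarrow> [] \<in> P \<Longrightarrow> card {p. c # p \<in> P} < card P"
proof -
  assume P: "finite P" "[] \<in> P"
  have "card {p. c # p \<in> P} = card (Cons c ` {p. c # p \<in> P})" by (simp add: card_image)
  also have "\<dots> < card P" using P by (intro psubset_card_mono) auto
  finally show ?thesis .
qed

lemma kary_addrs_decompose:
  assumes "kary_addrs k P" and "[] \<in> P"
  shows "P = insert [] (\<Union>c<k. Cons c ` {p. c # p \<in> P})"
proof (intro equalityI subsetI)
  fix p assume "p \<in> P"
  show "p \<in> insert [] (\<Union>c<k. Cons c ` {p. c # p \<in> P})"
  proof (cases p)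
    case (Cons c q)
    with \<open>p \<in> P\<close> have "[c] \<in> P" using kary_addrs_prefix[OF assms(1), of "[c]" q] by simp
    then have "c < k" using kary_addrs_letter[OF assms(1), of "[]" c] by simp
    with \<open>p \<in> P\<close> Cons show ?thesis by blast
  qed simp
qed (use assms(2) in auto)

lemma kary_addrs_imp_node_addrs:
  "kary_addrs (ar a) P \<Longrightarrow> \<exists>t. gtree {a} ar t \<and> node_addrs t = P"
proof (induction "card P" arbitrary: P rule: less_induct)
  case less
  show ?case
  proof (cases "P = {}")
    case True
    then show ?thesis using gtree_Leaf by fastforce
  next
    case False
    then have "[] \<in> P" using kary_addrs_Nil[OF less.prems] by blast
    have "finite P" using kary_addrs_finite[OF less.prems] .
    have "\<exists>t. gtree {a} ar t \<and> node_addrs t = {p. c # p \<in> P}" for c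
      using less.hyps[OF card_child_addrs_less[OF \<open>finite P\<close> \<open>[] \<in> P\<close>] kary_addrs_child[OF less.prems]] .
    then obtain f where f: "\<And>c. gtree {a} ar (f c) \<and> node_addrs (f c) = {p. c # p \<in> P}"
      by metis
    have "gtree {a} ar (Node a (map f [0..<ar a]))" using f by (intro gtree_Node) auto
    moreover have "node_addrs (Node a (map f [0..<ar a])) = P"
      using kary_addrs_decompose[OF less.prems \<open>[] \<in> P\<close>] f by (simp add: node_addrs.simps)
    ultimately show ?thesis by blast
  qed
qed

section \<open>Grafting adds an address\<close>

lemma node_addrs_list_update:
  assumes "c < length ts" and "node_addrs u = insert l (node_addrs (ts ! c))"
  shows "node_addrs (Node b (ts[c := u])) = insert (c # l) (node_addrs (Node b ts))"
proof (rule set_eqI)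
  fix p show "p \<in> node_addrs (Node b (ts[c := u])) \<longleftrightarrow> p \<in> insert (c # l) (node_addrs (Node b ts))"
    using assms by (cases p) (auto simp: nth_list_update)
qed

lemma node_addrs_graft:
  "i < leaves t \<Longrightarrow> \<exists>l. l \<notin> node_addrs t \<and> node_addrs (graft ar t i a) = insert l (node_addrs t)"
proof (induction t arbitrary: i)
  case Leaf
  then show ?case by (intro exI[of _ "[]"]) (simp add: node_addrs.simps)
next
  case (Node b ts)
  from Node.prems have "i < sum_list (map leaves ts)" by simp
  then obtain c j where cj: "c < length ts" "j < leaves (ts ! c)"
    "graftl ar ts i a = ts[c := graft ar (ts ! c) j a]"
    using graftl_eq_list_update[of i ts ar a] by blast
  moreover obtain l where "l \<notin> node_addrs (ts ! c)"
    "node_addrs (graft ar (ts ! c) j a) = insert l (node_addrs (ts ! c))"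
    using Node.IH[OF nth_mem[OF cj(1)] cj(2)] by blast
  ultimately show ?case
    using node_addrs_list_update[of c ts "graft ar (ts ! c) j a" l b]
    by (intro exI[of _ "c # l"]) simp
qed

lemma node_addrs_graft_onto:
  "gtree {a} ar t \<Longrightarrow> l \<notin> node_addrs t \<Longrightarrow> kary_addrs (ar a) (insert l (node_addrs t)) \<Longrightarrow>
    \<exists>i<leaves t. node_addrs (graft ar t i a) = insert l (node_addrs t)"
proof (induction t arbitrary: l rule: gtree.induct)
  case gtree_Leaf
  then have "l = []" using kary_addrs_prefix[of _ _ "[]" l] by auto
  then show ?case by (auto simp: node_addrs.simps)
next
  case (gtree_Node b ts)
  obtain c l' where l: "l = c # l'" using gtree_Node.prems(1) by (cases l) auto
  have "[c] \<in> insert l (node_addrs (Node b ts))"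
    using kary_addrs_prefix[OF gtree_Node.prems(2), of "[c]" l'] l by simp
  then have c: "c < length ts"
    using kary_addrs_letter[OF gtree_Node.prems(2), of "[]" c] gtree_Node.hyps(1,2) by simp
  have "{p. c # p \<in> insert l (node_addrs (Node b ts))} = insert l' (node_addrs (ts ! c))"
    using l c by auto
  then have "kary_addrs (ar a) (insert l' (node_addrs (ts ! c)))"
    using kary_addrs_child[OF gtree_Node.prems(2), of c] by simp
  moreover have "l' \<notin> node_addrs (ts ! c)" using gtree_Node.prems(1) l c by simp
  ultimately obtain j where j: "j < leaves (ts ! c)"
    "node_addrs (graft ar (ts ! c) j a) = insert l' (node_addrs (ts ! c))"
    using bspec[OF gtree_Node.IH nth_mem[OF c]] by blast
  define i where "i = sum_list (map leaves (take c ts)) + j"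
  have "i < leaves (Node b ts)" using leaf_offset_less[OF c j(1)] by (simp add: i_def)
  moreover have "node_addrs (graft ar (Node b ts) i a) = insert l (node_addrs (Node b ts))"
    using graftl_offset[OF c j(1)] node_addrs_list_update[OF c j(2)] l by (simp add: i_def)
  ultimately show ?case by blast
qed

lemma node_addrs_grafts:
  assumes "gtree {a} ar t"
  shows "node_addrs ` grafts {a} ar t = upper_covers (Collect (kary_addrs (ar a))) (node_addrs t)"
proof (intro equalityI subsetI)
  fix Q assume "Q \<in> node_addrs ` grafts {a} ar t"
  then obtain s where s: "s \<in> grafts {a} ar t" "Q = node_addrs s" by blast
  then obtain i where i: "i < leaves t" "s = graft ar t i a" unfolding grafts_def by blast
  have "gtree {a} ar s" using grafts_subset_gtree[OF assms] s(1) by blast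
  from kary_addrs_node_addrs[OF this] have "kary_addrs (ar a) Q" using s(2) by simp
  moreover obtain l where "l \<notin> node_addrs t" "Q = insert l (node_addrs t)"
    using node_addrs_graft[OF i(1), of ar a] s(2) i(2) by blast
  ultimately show "Q \<in> upper_covers (Collect (kary_addrs (ar a))) (node_addrs t)"
    unfolding upper_covers_def by blast
next
  fix Q assume "Q \<in> upper_covers (Collect (kary_addrs (ar a))) (node_addrs t)"
  then obtain l where "l \<notin> node_addrs t" "Q = insert l (node_addrs t)" "kary_addrs (ar a) Q"
    unfolding upper_covers_def by blast
  then obtain i where "i < leaves t" "Q = node_addrs (graft ar t i a)"
    using node_addrs_graft_onto[OF assms, of l] by auto
  then show "Q \<in> node_addrs ` grafts {a} ar t" unfolding grafts_def by blast
qed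

lemma node_addrs_ungrafts:
  assumes "gtree {a} ar t"
  shows "node_addrs ` ungrafts {a} ar t = lower_covers (Collect (kary_addrs (ar a))) (node_addrs t)"
proof (intro equalityI subsetI)
  fix Q assume "Q \<in> node_addrs ` ungrafts {a} ar t"
  then obtain r where r: "gtree {a} ar r" "t \<in> grafts {a} ar r" "Q = node_addrs r"
    unfolding ungrafts_def by blast
  then have "node_addrs t \<in> upper_covers (Collect (kary_addrs (ar a))) Q"
    using imageI[OF r(2), of node_addrs] node_addrs_grafts[OF r(1)] by simp
  then show "Q \<in> lower_covers (Collect (kary_addrs (ar a))) (node_addrs t)"
    using kary_addrs_node_addrs[OF r(1)] r(3) unfolding upper_covers_def lower_covers_def by blast
next
  fix Q assume Q: "Q \<in> lower_covers (Collect (kary_addrs (ar a))) (node_addrs t)"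
  then obtain r where r: "gtree {a} ar r" "Q = node_addrs r"
    unfolding lower_covers_def using kary_addrs_imp_node_addrs[of ar a Q] by blast
  have "node_addrs t \<in> upper_covers (Collect (kary_addrs (ar a))) Q"
    using Q kary_addrs_node_addrs[OF assms] unfolding upper_covers_def lower_covers_def by blast
  then have "node_addrs t \<in> node_addrs ` grafts {a} ar r"
    using node_addrs_grafts[OF r(1)] r(2) by simp
  then obtain s where s: "s \<in> grafts {a} ar r" "node_addrs s = node_addrs t" by force
  moreover have "gtree {a} ar s" using grafts_subset_gtree[OF r(1)] s(1) by blast
  ultimately have "t \<in> grafts {a} ar r" using node_addrs_inject[OF _ assms] by metis
  then show "Q \<in> node_addrs ` ungrafts {a} ar t" using r unfolding ungrafts_def by blast
qed

definition max_addrs :: "nat list set \<Rightarrow> nat list set" where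
  "max_addrs P = {m \<in> P. \<forall>c. m @ [c] \<notin> P}"

lemma lower_covers_kary_addrs:
  assumes "kary_addrs k P"
  shows "lower_covers (Collect (kary_addrs k)) P = (\<lambda>m. P - {m}) ` max_addrs P"
proof (intro equalityI subsetI)
  fix Q assume "Q \<in> lower_covers (Collect (kary_addrs k)) P"
  then obtain m where Q: "kary_addrs k Q" "m \<notin> Q" "P = insert m Q"
    unfolding lower_covers_def by blast
  have "m @ [c] \<notin> P" for c
  proof
    assume "m @ [c] \<in> P"
    then have "m @ [c] \<in> Q" using Q(3) by simp
    then show False using kary_addrs_prefix[OF Q(1)] Q(2) by blast
  qed
  then have "m \<in> max_addrs P" using Q(3) unfolding max_addrs_def by blast
  moreover have "Q = P - {m}" using Q(2,3) by blast
  ultimately show "Q \<in> (\<lambda>m. P - {m}) ` max_addrs P" by blast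
next
  fix Q assume "Q \<in> (\<lambda>m. P - {m}) ` max_addrs P"
  then obtain m where m: "m \<in> P" "\<And>c. m @ [c] \<notin> P" "Q = P - {m}"
    unfolding max_addrs_def by blast
  have "kary_addrs k Q"
  proof (rule kary_addrsI)
    show "finite Q" using kary_addrs_finite[OF assms] m(3) by simp
  next
    fix p q assume pq: "p @ q \<in> Q"
    have "p \<noteq> m"
    proof
      assume "p = m"
      with pq m(3) obtain c q' where "q = c # q'" by (cases q) auto
      with pq \<open>p = m\<close> m(3) have "(m @ [c]) @ q' \<in> P" by simp
      with m(2) show False using kary_addrs_prefix[OF assms] by blast
    qed
    with pq m(3) show "p \<in> Q" using kary_addrs_prefix[OF assms] by blast
  next
    fix p c assume "p @ [c] \<in> Q"
    then show "c < k" using kary_addrs_letter[OF assms] m(3) by blast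
  qed
  then show "Q \<in> lower_covers (Collect (kary_addrs k)) P"
    using m unfolding lower_covers_def by blast
qed

lemma card_lower_covers_kary_addrs:
  "kary_addrs k P \<Longrightarrow> card (lower_covers (Collect (kary_addrs k)) P) = card (max_addrs P)"
  unfolding lower_covers_kary_addrs
  by (intro card_image inj_onI) (auto simp: max_addrs_def)

lemma max_addrs_node_addrs_Node:
  "max_addrs (node_addrs (Node b ts)) =
    (if \<forall>t\<in>set ts. t = Leaf then {[]} else {}) \<union> (\<Union>c<length ts. Cons c ` max_addrs (node_addrs (ts ! c)))"
proof (rule set_eqI)
  fix p
  show "p \<in> max_addrs (node_addrs (Node b ts)) \<longleftrightarrow>
    p \<in> (if \<forall>t\<in>set ts. t = Leaf then {[]} else {}) \<union> (\<Union>c<length ts. Cons c ` max_addrs (node_addrs (ts ! c)))"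
  proof (cases p)
    case Nil
    have "(\<forall>c. [c] \<notin> node_addrs (Node b ts)) \<longleftrightarrow> (\<forall>t\<in>set ts. t = Leaf)"
      by (auto simp: Nil_in_node_addrs_iff all_set_conv_all_nth)
    with Nil show ?thesis by (auto simp: max_addrs_def)
  qed (auto simp: max_addrs_def)
qed

lemma card_max_addrs_node_addrs: "card (max_addrs (node_addrs t)) = nmax t"
proof (induction t)
  case Leaf
  then show ?case by (simp add: max_addrs_def)
next
  case (Node b ts)
  show ?case
  proof (cases "\<forall>t\<in>set ts. t = Leaf")
    case True
    then have "ts ! c = Leaf" if "c < length ts" for c
      using that by simp
    then have "max_addrs (node_addrs (ts ! c)) = {}" if "c < length ts" for c
      using that by (simp add: max_addrs_def)
    with True show ?thesis by (simp add: max_addrs_node_addrs_Node)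
  next
    case False
    have "finite (max_addrs (node_addrs t))" for t
      using finite_node_addrs[of t] by (simp add: max_addrs_def)
    then have "card (max_addrs (node_addrs (Node b ts))) =
        (\<Sum>c<length ts. card (Cons c ` max_addrs (node_addrs (ts ! c))))"
      unfolding max_addrs_node_addrs_Node if_not_P[OF False] Un_empty_left
      by (intro card_UN_disjoint) auto
    also have "\<dots> = (\<Sum>c<length ts. nmax (ts ! c))"
      using Node.IH by (simp add: card_image)
    also have "\<dots> = nmax (Node b ts)"
      unfolding nmax.simps if_not_P[OF False] by (simp add: sum_list_sum_nth atLeast0LessThan)
    finally show ?thesis .
  qed
qed

section \<open>One-letter alphabets\<close>

lemma card_image_Int:
  "inj_on f C \<Longrightarrow> A \<subseteq> C \<Longrightarrow> B \<subseteq> C \<Longrightarrow> card (f ` A \<inter> f ` B) = card (A \<inter> B)"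
  by (metis card_image inj_on_image_Int inj_on_subset inf.coboundedI1)

lemma finite_ungrafts_singleton: "gtree {a} ar t \<Longrightarrow> finite (ungrafts {a} ar t)"
proof -
  assume t: "gtree {a} ar t"
  have "finite (max_addrs (node_addrs t))"
    using finite_node_addrs[of t] by (simp add: max_addrs_def)
  then have "finite (node_addrs ` ungrafts {a} ar t)"
    by (simp add: node_addrs_ungrafts[OF t] lower_covers_kary_addrs[OF kary_addrs_node_addrs[OF t]])
  then show ?thesis
    using inj_on_subset[OF inj_on_node_addrs ungrafts_gtree] by (rule finite_imageD)
qed

lemma card_ungrafts_singleton: "gtree {a} ar t \<Longrightarrow> card (ungrafts {a} ar t) = nmax t"
proof -
  assume t: "gtree {a} ar t"
  have "card (ungrafts {a} ar t) = card (node_addrs ` ungrafts {a} ar t)"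
    using inj_on_subset[OF inj_on_node_addrs ungrafts_gtree] by (rule card_image[symmetric])
  also have "\<dots> = card (max_addrs (node_addrs t))"
    by (simp add: node_addrs_ungrafts[OF t] card_lower_covers_kary_addrs[OF kary_addrs_node_addrs[OF t]])
  finally show ?thesis by (simp add: card_max_addrs_node_addrs)
qed

lemma commcoef_singleton:
  assumes t: "gtree {a} ar t" and t': "gtree {a} ar t'"
  shows "commcoef {a} ar t' t = (if t' = t then int (leaves t) - int (nmax t) else 0)"
proof (cases "t' = t")
  case True
  then show ?thesis
    using t by (simp add: commcoef_eq_card finite_ungrafts_singleton card_grafts_singleton
        card_ungrafts_singleton)
next
  case False
  let ?F = "Collect (kary_addrs (ar a))"
  have "node_addrs t \<noteq> node_addrs t'" using False node_addrs_inject[OF t t'] by blast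
  have "card (grafts {a} ar t \<inter> grafts {a} ar t') =
      card (upper_covers ?F (node_addrs t) \<inter> upper_covers ?F (node_addrs t'))"
    using card_image_Int[OF inj_on_node_addrs grafts_subset_gtree[OF t] grafts_subset_gtree[OF t']]
    by (simp add: node_addrs_grafts t t')
  also have "\<dots> = card (lower_covers ?F (node_addrs t) \<inter> lower_covers ?F (node_addrs t'))"
    using kary_addrs_node_addrs[OF t] kary_addrs_node_addrs[OF t'] \<open>node_addrs t \<noteq> node_addrs t'\<close>
    by (intro card_common_upper_covers_eq_lower) (auto intro: kary_addrs_Un kary_addrs_Int)
  also have "\<dots> = card (ungrafts {a} ar t \<inter> ungrafts {a} ar t')"
    using card_image_Int[OF inj_on_node_addrs ungrafts_gtree[of "{a}" ar t] ungrafts_gtree[of "{a}" ar t']]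
    by (simp add: node_addrs_ungrafts t t')
  finally show ?thesis
    using False t by (simp add: commcoef_eq_card finite_ungrafts_singleton)
qed

lemma diag_self_dual_iff:
  "diag_self_dual G ar \<phi> \<longleftrightarrow>
    (\<forall>t t'. gtree G ar t \<longrightarrow> gtree G ar t' \<longrightarrow> t' \<noteq> t \<longrightarrow> commcoef G ar t' t = 0) \<and>
    (\<forall>t. gtree G ar t \<longrightarrow> \<phi> t = commcoef G ar t t)"
  unfolding diag_self_dual_def by auto

lemma gtree_empty: "gtree {} ar t \<Longrightarrow> t = Leaf"
  by (cases rule: gtree.cases) auto

theorem proposition2p1:
  fixes G :: "'a set" and ar :: "'a \<Rightarrow> nat"
  assumes "finite G" and "\<forall>a\<in>G. ar a \<ge> 1"
  shows "((\<exists>\<phi>. diag_self_dual G ar \<phi>) \<longleftrightarrow> (G = {} \<or> (\<exists>a. G = {a})))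
       \<and> (\<forall>a \<phi> t. G = {a} \<longrightarrow> diag_self_dual G ar \<phi> \<longrightarrow> gtree G ar t \<longrightarrow>
           \<phi> t = int (leaves t) - int (nmax t))"
proof (intro conjI allI impI iffI)
  assume "\<exists>\<phi>. diag_self_dual G ar \<phi>"
  then have off_diagonal: "commcoef G ar t' t = 0" if "gtree G ar t" "gtree G ar t'" "t' \<noteq> t" for t t'
    using that by (auto simp: diag_self_dual_iff)
  show "G = {} \<or> (\<exists>a. G = {a})"
  proof (rule ccontr)
    assume "\<not> (G = {} \<or> (\<exists>a. G = {a}))"
    then obtain a b where ab: "a \<in> G" "b \<in> G" "a \<noteq> b" by blast
    then have "commcoef G ar (Node b (replicate (ar b) Leaf)) (Node a (replicate (ar a) Leaf)) = 0"
      by (intro off_diagonal) (auto intro!: gtree.intros)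
    with commcoef_distinct_corollas[OF assms(1) ab] show False by simp
  qed
next
  assume "G = {} \<or> (\<exists>a. G = {a})"
  then have "diag_self_dual G ar (\<lambda>t. commcoef G ar t t)"
    by (auto simp: diag_self_dual_iff commcoef_singleton dest: gtree_empty)
  then show "\<exists>\<phi>. diag_self_dual G ar \<phi>" by blast
next
  fix a \<phi> t assume "G = {a}" "diag_self_dual G ar \<phi>" "gtree G ar t"
  then show "\<phi> t = int (leaves t) - int (nmax t)"
    by (simp add: diag_self_dual_iff commcoef_singleton)
qed

end
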